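(* Let $k_p, k_s, n_s$ be positive integers with $n_s \ge k_s$, and let $\epsilon_s \in [0,1)$. Define \[ \epsilon_p = \Pr\bigl(S < k_s\bigr), \qquad S \sim \mathrm{Binomial}(n_s, 1-\epsilon_s), \] i.e. $\epsilon_p = \sum_{j=n_s-k_s+1}^{n_s}\binom{n_s}{j}\epsilon_s^{\,j}(1-\epsilon_s)^{n_s-j}$. Let \[ \mathbb{E}\bigl[T^{\mathrm{IIR}}\bigr] = \frac{k_p\, k_s}{1-\epsilon_s}, \qquad \mathbb{E}\bigl[T^{\mathrm{FR}}\bigr] = \frac{k_p\, n_s}{1-\epsilon_p}. \] Then $\mathbb{E}\bigl[T^{\mathrm{FR}}\bigr] \ge \mathbb{E}\bigl[T^{\mathrm{IIR}}\bigr]$.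
   Context: Point-to-point transmission model: a chunk consists of $k_p$ packets, each consisting of $k_s$ symbols. The physical channel is a memoryless symbol erasure channel that erases each transmitted symbol independently with probability $\epsilon_s$. A packet can be decoded once any $k_s$ of its transmitted coded symbols are received, and a chunk once any $k_p$ of its coded packets are received. In the Infinite Incremental Redundancy (IIR) scheme, coded symbols of a packet are sent until $k_s$ are received (no packet erasures). The number of channel uses $T^{\mathrm{IIR}}$ to decode the chunk is then negative binomial with parameters $(k_p k_s, 1-\epsilon_s)$, so its mean is $k_p k_s/(1-\epsilon_s)$. In the Fixed Redundancy (FR) scheme, each packet is sent using exactly $n_s$ coded symbols and is erased with probability $\epsilon_p$ (the probability that fewer than $k_s$ of the $n_s$ symbols are received). Coded packets are sent ratelessly until $k_p$ packets are received. The number of channel uses $T^{\mathrm{FR}}$ therefore has mean $k_p n_s/(1-\epsilon_p)$. Note that $\epsilon_p<1$ because $\epsilon_s<1$. *)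

theory Defs
  imports "HOL-Probability.Probability"
begin

definition eps_p :: "nat \<Rightarrow> nat \<Rightarrow> real \<Rightarrow> real" where
  "eps_p ns ks eps_s = measure_pmf.prob (binomial_pmf ns (1 - eps_s)) {S. S < ks}"

definition E_T_IIR :: "nat \<Rightarrow> nat \<Rightarrow> real \<Rightarrow> real" where
  "E_T_IIR kp ks eps_s = real kp * real ks / (1 - eps_s)"

definition E_T_FR :: "nat \<Rightarrow> nat \<Rightarrow> nat \<Rightarrow> real \<Rightarrow> real" where
  "E_T_FR kp ks ns eps_s = real kp * real ns / (1 - eps_p ns ks eps_s)"

end

theory Submission
  imports Defs
begin

text \<open>The received-symbol count S of one FR packet is binomial with mean n_s (1 - \<epsilon>_s), so
  Markov's inequality gives k_s \<cdot> P(S \<ge> k_s) \<le> n_s (1 - \<epsilon>_s), i.e.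
  k_s (1 - \<epsilon>_p) \<le> n_s (1 - \<epsilon>_s). Dividing by the positive quantities
  (1 - \<epsilon>_s)(1 - \<epsilon>_p) and scaling by k_p is the claim.\<close>

lemma sum_of_nat_mult_binomial_ring:
  fixes a b :: "'a :: comm_semiring_1"
  shows "(\<Sum>k\<le>n. of_nat k * (of_nat (n choose k) * a ^ k * b ^ (n - k)))
           = of_nat n * a * (a + b) ^ (n - 1)"
proof (cases n)
  case 0
  then show ?thesis by simp
next
  case (Suc m)
  have "(\<Sum>k\<le>Suc m. of_nat k * (of_nat (Suc m choose k) * a ^ k * b ^ (Suc m - k)))
      = (\<Sum>j\<le>m. of_nat (Suc j * (Suc m choose Suc j)) * (a ^ Suc j * b ^ (m - j)))"
    by (subst sum.atMost_Suc_shift) (simp add: algebra_simps del: binomial_Suc_Suc)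
  also have "\<dots> = (\<Sum>j\<le>m. of_nat (Suc m) * a * (of_nat (m choose j) * a ^ j * b ^ (m - j)))"
    by (simp only: Suc_times_binomial) (simp add: algebra_simps)
  also have "\<dots> = of_nat (Suc m) * a * (a + b) ^ m"
    by (simp add: sum_distrib_left[symmetric] binomial_ring atLeast0AtMost)
  finally show ?thesis
    using Suc by simp
qed

lemma expectation_binomial_pmf:
  assumes "p \<in> {0..1}"
  shows "measure_pmf.expectation (binomial_pmf n p) real = real n * p"
  using sum_of_nat_mult_binomial_ring[of n p "1 - p"]
  by (simp add: expectation_binomial_pmf'[OF assms] mult_ac)

lemma prob_binomial_pmf_atLeast_le:
  assumes "p \<in> {0..1}" "0 < k"
  shows "measure_pmf.prob (binomial_pmf n p) {m. k \<le> m} \<le> real n * p / real k"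
proof -
  have "measure_pmf.prob (binomial_pmf n p) {m \<in> space (binomial_pmf n p). real k \<le> real m}
          \<le> measure_pmf.expectation (binomial_pmf n p) real / real k"
    using assms by (intro integral_Markov_inequality_measure[where A = UNIV]) auto
  then show ?thesis
    using assms by (simp add: expectation_binomial_pmf)
qed

lemma prob_binomial_pmf_atLeast_pos:
  assumes "0 < p" "p \<le> 1" "k \<le> n"
  shows "0 < measure_pmf.prob (binomial_pmf n p) {m. k \<le> m}"
proof -
  have "0 < pmf (binomial_pmf n p) n"
    using assms by simp
  also have "\<dots> \<le> measure_pmf.prob (binomial_pmf n p) {m. k \<le> m}"
    unfolding measure_pmf_single[symmetric]
    using assms by (intro measure_pmf.finite_measure_mono) auto
  finally show ?thesis .
qed

lemma one_minus_eps_p: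
  "1 - eps_p ns ks eps_s = measure_pmf.prob (binomial_pmf ns (1 - eps_s)) {m. ks \<le> m}"
  unfolding eps_p_def
  by (subst measure_pmf.prob_compl[symmetric]) (auto intro!: arg_cong[where f = "measure _"])

theorem theorem1:
  fixes kp ks ns :: nat and eps_s :: real
  assumes "kp > 0" "ks > 0" "ns > 0" "ns \<ge> ks"
    and "0 \<le> eps_s" "eps_s < 1"
  shows "E_T_FR kp ks ns eps_s \<ge> E_T_IIR kp ks eps_s"
proof -
  define q where "q = 1 - eps_s"
  have q: "0 < q" "q \<le> 1"
    using assms unfolding q_def by auto
  have success_pos: "0 < 1 - eps_p ns ks eps_s"
    using q assms by (simp add: one_minus_eps_p q_def[symmetric] prob_binomial_pmf_atLeast_pos)
  have "1 - eps_p ns ks eps_s \<le> real ns * q / real ks"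
    using q assms by (simp add: one_minus_eps_p q_def[symmetric] prob_binomial_pmf_atLeast_le)
  then have "real ks / q \<le> real ns / (1 - eps_p ns ks eps_s)"
    using success_pos q assms by (simp add: field_simps)
  then show ?thesis
    unfolding E_T_FR_def E_T_IIR_def q_def[symmetric]
    by (simp add: mult_left_mono times_divide_eq_right[symmetric] del: times_divide_eq_right)
qed

end
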